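(* (Multiparty cut-elimination in MRL.) Let $n\ge1$ and let $R_1,\ldots,R_n\subseteq\mathcal{R}$ be such that the complements $\overline{R_1},\ldots,\overline{R_n}$ are pairwise disjoint and $\overline{R_1}\cup\cdots\cup\overline{R_n}=\mathcal{R}$. For all sequents $\Gamma_1,\ldots,\Gamma_n$ and every formula $A$ of MRL: if $\Gamma_i, R_i{:}A$ is derivable in MRL for each $1\le i\le n$, then $\Gamma_1,\ldots,\Gamma_n$ is derivable in MRL.
   Context: Fix a nonempty set $\mathcal{R}$ (the set of roles). For $R\subseteq\mathcal{R}$ write $\overline{R}=\mathcal{R}\setminus R$. An ultrafilter $\mathcal{U}$ on $\mathcal{R}$ is a set of subsets of $\mathcal{R}$ such that $\mathcal{R}\in\mathcal{U}$; $R_1\in\mathcal{U}$ and $R_1\subseteq R_2$ imply $R_2\in\mathcal{U}$; $R_1,R_2\in\mathcal{U}$ imply $R_1\cap R_2\in\mathcal{U}$; and for every $R\subseteq\mathcal{R}$, $R\in\mathcal{U}$ or $\overline{R}\in\mathcal{U}$. An endomorphism is any function $f:\mathcal{R}\to\mathcal{R}$, and $f^{-1}(R)$ denotes the preimage of $R$. Fix a first-order language of terms $t$ with variables $x$, and a collection of primitive (atomic) formulas $a$ (which may contain terms). Formulas of MRL: $A ::= a \mid \neg_f(A) \mid A_1\wedge_{\mathcal{U}} A_2 \mid A\supset_{f,\mathcal{U}} B \mid \forall_{\mathcal{U}}(\lambda x.A)$, with $f$ an endomorphism and $\mathcal{U}$ an ultrafilter on $\mathcal{R}$; $x$ is bound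 in $\forall_{\mathcal{U}}(\lambda x.A)$, and $A[t/x]$ is capture-avoiding substitution. An i-formula is a pair $R{:}A$ with $R\subseteq\mathcal{R}$ and $A$ a formula; a sequent is a finite multiset of i-formulas, and comma denotes multiset union. Derivability in MRL is given by the rules (premises $\Rightarrow$ conclusion, $\Gamma,\Gamma_1,\Gamma_2$ arbitrary sequents): (Id) $\Gamma, R_1{:}a,\ldots,R_n{:}a$ is derivable whenever $n\ge1$ and $R_1,\ldots,R_n$ are pairwise disjoint with union $\mathcal{R}$; (Weaken) $\Gamma,R{:}A,R{:}A \Rightarrow \Gamma,R{:}A$; ($\neg$) $\Gamma, f^{-1}(R){:}A \Rightarrow \Gamma, R{:}\neg_f(A)$; ($\wedge$-neg-l) if $R\notin\mathcal{U}$: $\Gamma,R{:}A\Rightarrow\Gamma,R{:}A\wedge_{\mathcal{U}}B$; ($\wedge$-neg-r) if $R\notin\mathcal{U}$: $\Gamma,R{:}B\Rightarrow\Gamma,R{:}A\wedge_{\mathcal{U}}B$; ($\wedge$-pos) if $R\in\mathcal{U}$: $(\Gamma,R{:}A;\ \Gamma,R{:}B)\Rightarrow\Gamma,R{:}A\wedge_{\mathcal{U}}B$; ($\supset$-neg) if $R\notin\mathcal{U}$: $\Gamma,f^{-1}(R){:}A,R{:}B\Rightarrow\Gamma,R{:}A\supset_{f,\mathcal{U}}B$; ($\supset$-pos) if $R\in\mathcal{U}$: $(\Gamma_1,f^{-1}(R){:}A;\ \Gamma_2,R{:}B)\Rightarrow\Gamma_1,\Gamma_2,R{:}A\supset_{f,\mathcal{U}}B$;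 ($\forall$-neg) if $R\notin\mathcal{U}$ and $t$ is a term: $\Gamma,R{:}A[t/x]\Rightarrow\Gamma,R{:}\forall_{\mathcal{U}}(\lambda x.A)$; ($\forall$-pos) if $R\in\mathcal{U}$ and $x$ has no free occurrence in $\Gamma$: $\Gamma,R{:}A\Rightarrow\Gamma,R{:}\forall_{\mathcal{U}}(\lambda x.A)$. A sequent is derivable in MRL if it is the conclusion of a finite derivation tree built from these rules. *)

theory Defs
  imports Main "HOL-Library.Multiset"
begin

definition ultrafilter :: "'r set set \<Rightarrow> bool" where
  "ultrafilter U \<longleftrightarrow>
     UNIV \<in> U \<and>
     (\<forall>R1 R2. R1 \<in> U \<and> R1 \<subseteq> R2 \<longrightarrow> R2 \<in> U) \<and>
     (\<forall>R1 R2. R1 \<in> U \<and> R2 \<in> U \<longrightarrow> R1 \<inter> R2 \<in> U) \<and>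
     (\<forall>R. R \<in> U \<or> - R \<in> U)"

datatype 'f trm = Var nat | Fn 'f "'f trm list"

datatype ('r, 'f, 'p) fm =
    Atom 'p "'f trm list"
  | Neg "'r \<Rightarrow> 'r" "('r, 'f, 'p) fm"
  | Conj "'r set set" "('r, 'f, 'p) fm" "('r, 'f, 'p) fm"
  | Imp "'r \<Rightarrow> 'r" "'r set set" "('r, 'f, 'p) fm" "('r, 'f, 'p) fm"
  | Forall "'r set set" "('r, 'f, 'p) fm"

fun wf_fm :: "('r, 'f, 'p) fm \<Rightarrow> bool" where
  "wf_fm (Atom p ts) = True"
| "wf_fm (Neg f A) = wf_fm A"
| "wf_fm (Conj U A B) = (ultrafilter U \<and> wf_fm A \<and> wf_fm B)"
| "wf_fm (Imp f U A B) = (ultrafilter U \<and> wf_fm A \<and> wf_fm B)"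
| "wf_fm (Forall U A) = (ultrafilter U \<and> wf_fm A)"

fun lift_trm :: "nat \<Rightarrow> 'f trm \<Rightarrow> 'f trm" where
  "lift_trm k (Var i) = Var (if i < k then i else Suc i)"
| "lift_trm k (Fn f ts) = Fn f (map (lift_trm k) ts)"

fun subst_trm :: "nat \<Rightarrow> 'f trm \<Rightarrow> 'f trm \<Rightarrow> 'f trm" where
  "subst_trm k t (Var i) = (if i < k then Var i else if i = k then t else Var (i - 1))"
| "subst_trm k t (Fn f ts) = Fn f (map (subst_trm k t) ts)"

fun lift_fm :: "nat \<Rightarrow> ('r, 'f, 'p) fm \<Rightarrow> ('r, 'f, 'p) fm" where
  "lift_fm k (Atom p ts) = Atom p (map (lift_trm k) ts)"
| "lift_fm k (Neg f A) = Neg f (lift_fm k A)"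
| "lift_fm k (Conj U A B) = Conj U (lift_fm k A) (lift_fm k B)"
| "lift_fm k (Imp f U A B) = Imp f U (lift_fm k A) (lift_fm k B)"
| "lift_fm k (Forall U A) = Forall U (lift_fm (Suc k) A)"

fun subst_fm :: "nat \<Rightarrow> 'f trm \<Rightarrow> ('r, 'f, 'p) fm \<Rightarrow> ('r, 'f, 'p) fm" where
  "subst_fm k t (Atom p ts) = Atom p (map (subst_trm k t) ts)"
| "subst_fm k t (Neg f A) = Neg f (subst_fm k t A)"
| "subst_fm k t (Conj U A B) = Conj U (subst_fm k t A) (subst_fm k t B)"
| "subst_fm k t (Imp f U A B) = Imp f U (subst_fm k t A) (subst_fm k t B)"
| "subst_fm k t (Forall U A) = Forall U (subst_fm (Suc k) (lift_trm 0 t) A)"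

type_synonym ('r, 'f, 'p) sequent = "('r set \<times> ('r, 'f, 'p) fm) multiset"

definition lift_seq :: "('r, 'f, 'p) sequent \<Rightarrow> ('r, 'f, 'p) sequent" where
  "lift_seq \<Gamma> = image_mset (\<lambda>(R, B). (R, lift_fm 0 B)) \<Gamma>"

inductive derivable :: "('r, 'f, 'p) sequent \<Rightarrow> bool" where
  Id: "\<lbrakk> Rs \<noteq> [];
         \<forall>i < length Rs. \<forall>j < length Rs. i \<noteq> j \<longrightarrow> Rs ! i \<inter> Rs ! j = {};
         \<Union> (set Rs) = UNIV \<rbrakk>
       \<Longrightarrow> derivable (\<Gamma> + mset (map (\<lambda>R. (R, Atom p ts)) Rs))"
| Weaken: "derivable (\<Gamma> + {#(R, A), (R, A)#}) \<Longrightarrow> derivable (\<Gamma> + {#(R, A)#})"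
| NegR: "derivable (\<Gamma> + {#(f -` R, A)#}) \<Longrightarrow> derivable (\<Gamma> + {#(R, Neg f A)#})"
| ConjNegL: "\<lbrakk> R \<notin> U; derivable (\<Gamma> + {#(R, A)#}) \<rbrakk>
       \<Longrightarrow> derivable (\<Gamma> + {#(R, Conj U A B)#})"
| ConjNegR: "\<lbrakk> R \<notin> U; derivable (\<Gamma> + {#(R, B)#}) \<rbrakk>
       \<Longrightarrow> derivable (\<Gamma> + {#(R, Conj U A B)#})"
| ConjPos: "\<lbrakk> R \<in> U; derivable (\<Gamma> + {#(R, A)#}); derivable (\<Gamma> + {#(R, B)#}) \<rbrakk>
       \<Longrightarrow> derivable (\<Gamma> + {#(R, Conj U A B)#})"
| ImpNeg: "\<lbrakk> R \<notin> U; derivable (\<Gamma> + {#(f -` R, A), (R, B)#}) \<rbrakk>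
       \<Longrightarrow> derivable (\<Gamma> + {#(R, Imp f U A B)#})"
| ImpPos: "\<lbrakk> R \<in> U; derivable (\<Gamma>1 + {#(f -` R, A)#}); derivable (\<Gamma>2 + {#(R, B)#}) \<rbrakk>
       \<Longrightarrow> derivable (\<Gamma>1 + \<Gamma>2 + {#(R, Imp f U A B)#})"
| ForallNeg: "\<lbrakk> R \<notin> U; derivable (\<Gamma> + {#(R, subst_fm 0 t A)#}) \<rbrakk>
       \<Longrightarrow> derivable (\<Gamma> + {#(R, Forall U A)#})"
| ForallPos: "\<lbrakk> R \<in> U; derivable (lift_seq \<Gamma> + {#(R, A)#}) \<rbrakk>
       \<Longrightarrow> derivable (\<Gamma> + {#(R, Forall U A)#})"

definition wf_seq :: "('r, 'f, 'p) sequent \<Rightarrow> bool" where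
  "wf_seq \<Gamma> \<longleftrightarrow> (\<forall>x \<in># \<Gamma>. wf_fm (snd x))"

end

theory Submission
  imports Defs
begin

text \<open>Multiparty cut is admissible by induction on the cut formula A, for every multiset of
  parties (R, \<Gamma>) such that each \<Gamma>, R:A is derivable and the complements of the role sets R
  partition the roles.

  If A is decorated with an ultrafilter U, at most one R lies outside U, since the complements of
  two such roles would be disjoint members of U. The positive rules and the negation rule are
  invertible, and so are the negative rules for conjunction and implication; hence every party can
  be inverted and the cut is performed on the immediate subformulas, the party outside U (if any)
  being cut against all the others one subformula at a time. The negative quantifier rule is not
  invertible: instead, the quantified occurrence is traced up its derivation to the instances of
  that rule, and the cut is applied there to the instantiated formula.

  Atomic occurrences are traced up to the identity axioms. This merges two parties into one whose
  role set is the intersection of theirs; a single remaining party has the empty role set, and an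
  atom without roles can be dropped.\<close>

lemma lift_lift_trm: "i \<le> k \<Longrightarrow> lift_trm i (lift_trm k t) = lift_trm (Suc k) (lift_trm i t)"
  by (induction t) auto

lemma lift_subst_trm_le:
  "i \<le> k \<Longrightarrow> lift_trm i (subst_trm k s u) = subst_trm (Suc k) (lift_trm i s) (lift_trm i u)"
  by (induction u) auto

lemma lift_subst_trm_ge:
  "k \<le> i \<Longrightarrow> lift_trm i (subst_trm k s u) = subst_trm k (lift_trm i s) (lift_trm (Suc i) u)"
  by (induction u) auto

lemma subst_lift_trm: "subst_trm k s (lift_trm k u) = u"
  by (induction u) (auto simp: map_idI)

lemma subst_subst_trm:
  "m \<le> k \<Longrightarrow> subst_trm k t (subst_trm m s u)
     = subst_trm m (subst_trm k t s) (subst_trm (Suc k) (lift_trm m t) u)"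
  by (induction u) (auto simp: subst_lift_trm)

lemma lift_lift_fm: "i \<le> k \<Longrightarrow> lift_fm i (lift_fm k A) = lift_fm (Suc k) (lift_fm i A)"
  by (induction A arbitrary: i k) (auto simp: lift_lift_trm)

lemma lift_subst_fm_le:
  "i \<le> k \<Longrightarrow> lift_fm i (subst_fm k s A) = subst_fm (Suc k) (lift_trm i s) (lift_fm i A)"
  by (induction A arbitrary: i k s) (auto simp: lift_subst_trm_le lift_lift_trm)

lemma lift_subst_fm_ge:
  "k \<le> i \<Longrightarrow> lift_fm i (subst_fm k s A) = subst_fm k (lift_trm i s) (lift_fm (Suc i) A)"
  by (induction A arbitrary: i k s) (auto simp: lift_subst_trm_ge lift_lift_trm)

lemma subst_lift_fm: "subst_fm k s (lift_fm k A) = A"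
  by (induction A arbitrary: k s) (auto simp: subst_lift_trm map_idI)

lemma subst_subst_fm:
  "m \<le> k \<Longrightarrow> subst_fm k t (subst_fm m s A)
     = subst_fm m (subst_trm k t s) (subst_fm (Suc k) (lift_trm m t) A)"
  by (induction A arbitrary: m k s t)
    (auto simp: subst_subst_trm lift_subst_trm_le lift_lift_trm)

fun connectives :: "('r, 'f, 'p) fm \<Rightarrow> nat" where
  "connectives (Atom p ts) = 0"
| "connectives (Neg f A) = Suc (connectives A)"
| "connectives (Conj U A B) = Suc (connectives A + connectives B)"
| "connectives (Imp f U A B) = Suc (connectives A + connectives B)"
| "connectives (Forall U A) = Suc (connectives A)"

lemma connectives_lift_fm [simp]: "connectives (lift_fm k A) = connectives A"
  by (induction A arbitrary: k) auto

lemma connectives_subst_fm [simp]: "connectives (subst_fm k t A) = connectives A"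
  by (induction A arbitrary: k t) auto

lemma wf_fm_lift_fm [simp]: "wf_fm (lift_fm k A) = wf_fm A"
  by (induction A arbitrary: k) auto

lemma wf_fm_subst_fm [simp]: "wf_fm (subst_fm k t A) = wf_fm A"
  by (induction A arbitrary: k t) auto

lemma lift_seq_eq: "lift_seq \<Gamma> = image_mset (apsnd (lift_fm 0)) \<Gamma>"
  by (simp add: lift_seq_def apsnd_def map_prod_def)

lemma lift_seq_simps [simp]:
  "lift_seq {#} = {#}"
  "lift_seq (add_mset X \<Gamma>) = add_mset (apsnd (lift_fm 0) X) (lift_seq \<Gamma>)"
  "lift_seq (\<Gamma> + \<Delta>) = lift_seq \<Gamma> + lift_seq \<Delta>"
  "lift_seq (replicate_mset m X) = replicate_mset m (apsnd (lift_fm 0) X)"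
  by (simp_all add: lift_seq_eq)

lemma derivable_add: "derivable \<Gamma> \<Longrightarrow> derivable (\<Gamma> + \<Delta>)"
proof (induction arbitrary: \<Delta> rule: derivable.induct)
  case (Id Rs \<Gamma> p ts)
  show ?case using derivable.Id[OF Id, of "\<Gamma> + \<Delta>"] by (simp add: ac_simps)
next
  case (Weaken \<Gamma> R A)
  then show ?case using derivable.Weaken[of "\<Gamma> + \<Delta>"] by (simp add: ac_simps)
next
  case (NegR \<Gamma> f R A)
  then show ?case using derivable.NegR[of "\<Gamma> + \<Delta>"] by (simp add: ac_simps)
next
  case (ConjNegL R U \<Gamma> A B)
  then show ?case using derivable.ConjNegL[of R U "\<Gamma> + \<Delta>"] by (simp add: ac_simps)
next
  case (ConjNegR R U \<Gamma> B A)
  then show ?case using derivable.ConjNegR[of R U "\<Gamma> + \<Delta>"] by (simp add: ac_simps)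
next
  case (ConjPos R U \<Gamma> A B)
  then show ?case using derivable.ConjPos[of R U "\<Gamma> + \<Delta>"] by (simp add: ac_simps)
next
  case (ImpNeg R U \<Gamma> f A B)
  then show ?case using derivable.ImpNeg[of R U "\<Gamma> + \<Delta>"] by (simp add: ac_simps)
next
  case (ImpPos R U \<Gamma>1 f A \<Gamma>2 B)
  then show ?case using derivable.ImpPos[of R U "\<Gamma>1 + \<Delta>" f A \<Gamma>2 B] by (simp add: ac_simps)
next
  case (ForallNeg R U \<Gamma> t A)
  then show ?case using derivable.ForallNeg[of R U "\<Gamma> + \<Delta>" t A] by (simp add: ac_simps)
next
  case (ForallPos R U \<Gamma> A)
  then show ?case using derivable.ForallPos[of R U "\<Gamma> + \<Delta>"] by (simp add: ac_simps lift_seq_def)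
qed

lemma derivable_mono: "derivable \<Gamma> \<Longrightarrow> \<Gamma> \<subseteq># \<Delta> \<Longrightarrow> derivable \<Delta>"
  by (metis subset_mset.add_diff_inverse derivable_add)

lemma derivable_absorb: "derivable (\<Gamma> + \<Delta>) \<Longrightarrow> set_mset \<Delta> \<subseteq> set_mset \<Gamma> \<Longrightarrow> derivable \<Gamma>"
proof (induction \<Delta>)
  case (add X \<Delta>)
  then obtain \<Gamma>' where \<Gamma>: "\<Gamma> = add_mset X \<Gamma>'" by (metis insert_subset mset_add set_mset_add_mset_insert)
  have "derivable (\<Gamma>' + \<Delta> + {#X, X#})" using add.prems(1) by (simp add: \<Gamma>)
  then have "derivable (\<Gamma> + \<Delta>)" using derivable.Weaken[of "\<Gamma>' + \<Delta>" "fst X" "snd X"] by (simp add: \<Gamma>)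
  then show ?case using add by simp
qed simp

lemma derivable_set_mono: "derivable \<Gamma> \<Longrightarrow> set_mset \<Gamma> \<subseteq> set_mset \<Delta> \<Longrightarrow> derivable \<Delta>"
  using derivable_absorb[of \<Delta> \<Gamma>] derivable_add[of \<Gamma> \<Delta>] by (simp add: add.commute)

lemma derivable_add_mset_absorb: "derivable (add_mset X \<Gamma>) \<Longrightarrow> X \<in># \<Gamma> \<Longrightarrow> derivable \<Gamma>"
  by (erule derivable_set_mono) auto

text \<open>\<Phi> k acts on formulas below the binders recorded in k, next k records one more binder, and
  g and h are the induced actions on terms.\<close>

lemma derivable_map:
  fixes \<Phi> :: "'i \<Rightarrow> ('r, 'f, 'p) fm \<Rightarrow> ('r, 'f, 'p) fm"
  assumes "derivable \<Gamma>"
    and "\<And>k p ts. \<Phi> k (Atom p ts) = Atom p (map (g k) ts)"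
    and "\<And>k f A. \<Phi> k (Neg f A) = Neg f (\<Phi> k A)"
    and "\<And>k U A B. \<Phi> k (Conj U A B) = Conj U (\<Phi> k A) (\<Phi> k B)"
    and "\<And>k f U A B. \<Phi> k (Imp f U A B) = Imp f U (\<Phi> k A) (\<Phi> k B)"
    and "\<And>k U A. \<Phi> k (Forall U A) = Forall U (\<Phi> (next k) A)"
    and lift: "\<And>k B. \<Phi> (next k) (lift_fm 0 B) = lift_fm 0 (\<Phi> k B)"
    and subst: "\<And>k t A. \<Phi> k (subst_fm 0 t A) = subst_fm 0 (h k t) (\<Phi> (next k) A)"
  shows "derivable (image_mset (apsnd (\<Phi> k)) \<Gamma>)"
  using assms(1)
proof (induction arbitrary: k rule: derivable.induct)
  case (Id Rs \<Gamma> p ts)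
  have "image_mset (apsnd (\<Phi> k)) (\<Gamma> + mset (map (\<lambda>R. (R, Atom p ts)) Rs))
      = image_mset (apsnd (\<Phi> k)) \<Gamma> + mset (map (\<lambda>R. (R, Atom p (map (g k) ts))) Rs)"
    by (induction Rs) (auto simp: assms(2))
  then show ?case using derivable.Id[OF Id] by simp
next
  case (ForallNeg R U \<Gamma> t A)
  show ?case
    using derivable.ForallNeg[OF ForallNeg(1), of _ "h k t" "\<Phi> (next k) A"] ForallNeg.IH[of k]
    by (simp add: subst assms(6))
next
  case (ForallPos R U \<Gamma> A)
  have "image_mset (apsnd (\<Phi> (next k))) (lift_seq \<Gamma>) = lift_seq (image_mset (apsnd (\<Phi> k)) \<Gamma>)"
    by (simp add: lift_seq_eq multiset.map_comp comp_def apsnd_def map_prod_def lift split_def)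
  then show ?case
    using derivable.ForallPos[OF ForallPos(1)] ForallPos.IH[of "next k"] by (simp add: assms(6))
next
  case (ImpNeg R U \<Gamma> f A B)
  then show ?case using derivable.ImpNeg[of R U _ f] by (fastforce simp: assms(5))
next
  case (ImpPos R U \<Gamma>1 f A \<Gamma>2 B)
  then show ?case using derivable.ImpPos[of R U _ f] by (fastforce simp: assms(5))
next
  case (Weaken \<Gamma> R A)
  then show ?case using derivable.Weaken by fastforce
next
  case (NegR \<Gamma> f R A)
  then show ?case using derivable.NegR by (fastforce simp: assms(3))
next
  case (ConjNegL R U \<Gamma> A B)
  then show ?case using derivable.ConjNegL by (fastforce simp: assms(4))
next
  case (ConjNegR R U \<Gamma> B A)
  then show ?case using derivable.ConjNegR by (fastforce simp: assms(4))
next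
  case (ConjPos R U \<Gamma> A B)
  then show ?case using derivable.ConjPos by (fastforce simp: assms(4))
qed

lemma derivable_lift_seq: "derivable \<Gamma> \<Longrightarrow> derivable (lift_seq \<Gamma>)"
  using derivable_map[of \<Gamma> lift_fm lift_trm Suc lift_trm 0]
  by (simp add: lift_seq_eq lift_lift_fm lift_subst_fm_ge)

lemma derivable_subst: "derivable \<Gamma> \<Longrightarrow> derivable (image_mset (apsnd (subst_fm 0 t)) \<Gamma>)"
  using derivable_map[of \<Gamma> "\<lambda>(k, t). subst_fm k t" "\<lambda>(k, t). subst_trm k t"
      "\<lambda>(k, t). (Suc k, lift_trm 0 t)" "\<lambda>(k, t). subst_trm k t" "(0, t)"]
  by (simp add: split_beta lift_subst_fm_le[symmetric] subst_subst_fm)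

lemma subst_lift_seq: "image_mset (apsnd (subst_fm 0 t)) (lift_seq \<Gamma>) = \<Gamma>"
  by (induction \<Gamma>) (auto simp: subst_lift_fm apsnd_def map_prod_def split_def)

definition partitions :: "'a set multiset \<Rightarrow> 'a set \<Rightarrow> bool" where
  "partitions M T \<longleftrightarrow> (\<forall>x. size {#S \<in># M. x \<in> S#} = (if x \<in> T then 1 else 0))"

lemma unique_index_iff_disjoint_cover:
  "(\<forall>x. \<exists>!i. i < length Rs \<and> x \<in> Rs ! i) \<longleftrightarrow>
    (\<forall>i < length Rs. \<forall>j < length Rs. i \<noteq> j \<longrightarrow> Rs ! i \<inter> Rs ! j = {}) \<and> \<Union> (set Rs) = UNIV"
  (is "?unique \<longleftrightarrow> ?disjoint \<and> ?cover")
proof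
  assume unique: ?unique
  have ?disjoint
  proof (intro allI impI)
    fix i j assume "i < length Rs" "j < length Rs" "i \<noteq> j"
    then show "Rs ! i \<inter> Rs ! j = {}" using unique by blast
  qed
  moreover have "x \<in> \<Union> (set Rs)" for x using unique[rule_format, of x] nth_mem by blast
  ultimately show "?disjoint \<and> ?cover" by blast
next
  assume "?disjoint \<and> ?cover"
  then have disjoint: ?disjoint and cover: ?cover by blast+
  show ?unique
  proof
    fix x
    obtain i where i: "i < length Rs" "x \<in> Rs ! i"
      using cover by (metis UNIV_I UnionE in_set_conv_nth)
    have "j = i" if "j < length Rs" "x \<in> Rs ! j" for j
      using disjoint i that by blast
    with i show "\<exists>!i. i < length Rs \<and> x \<in> Rs ! i" by blast
  qed
qed

lemma partitions_mset_UNIV_iff: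
  "partitions (mset Rs) UNIV \<longleftrightarrow>
     Rs \<noteq> [] \<and> (\<forall>i < length Rs. \<forall>j < length Rs. i \<noteq> j \<longrightarrow> Rs ! i \<inter> Rs ! j = {}) \<and>
     \<Union> (set Rs) = UNIV"
proof -
  have "size {#S \<in># mset Rs. x \<in> S#} = length (filter (\<lambda>S. x \<in> S) Rs)" for x
    by (metis mset_filter size_mset)
  also have "\<dots> x = card {i. i < length Rs \<and> x \<in> Rs ! i}" for x
    by (rule length_filter_conv_card)
  finally have "partitions (mset Rs) UNIV \<longleftrightarrow> (\<forall>x. card {i. i < length Rs \<and> x \<in> Rs ! i} = 1)"
    by (simp add: partitions_def)
  also have "\<dots> \<longleftrightarrow> (\<forall>x. \<exists>!i. i < length Rs \<and> x \<in> Rs ! i)"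
  proof -
    have "(\<exists>a. {i. P i} = {a}) \<longleftrightarrow> (\<exists>!i. P i)" for P :: "nat \<Rightarrow> bool"
      by (auto simp: set_eq_iff)
    then show ?thesis unfolding One_nat_def card_1_singleton_iff by presburger
  qed
  finally show ?thesis unfolding unique_index_iff_disjoint_cover by auto
qed

lemma partitions_single: "partitions {#S#} S"
  by (simp add: partitions_def)

lemma partitions_add:
  "partitions M S \<Longrightarrow> partitions N T \<Longrightarrow> S \<inter> T = {} \<Longrightarrow> partitions (M + N) (S \<union> T)"
  by (auto simp: partitions_def)

lemma partitions_remove:
  assumes "partitions M T" and "S \<in># M"
  shows "partitions {#R \<in># M. R \<noteq> S#} (T - S)"
  unfolding partitions_def filter_filter_mset
proof
  fix x
  have "{#R \<in># M. x \<in> R#} = {#R \<in># M. R \<noteq> S \<and> x \<in> R#} + {#R \<in># M. R = S \<and> x \<in> R#}"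
    by (induction M) auto
  then have split: "size {#R \<in># M. x \<in> R#}
      = size {#R \<in># M. R \<noteq> S \<and> x \<in> R#} + size {#R \<in># M. R = S \<and> x \<in> R#}"
    by (metis size_union)
  have total: "size {#R \<in># M. x \<in> R#} = (if x \<in> T then 1 else 0)"
    using assms(1) unfolding partitions_def by blast
  show "size {#R \<in># M. R \<noteq> S \<and> x \<in> R#} = (if x \<in> T - S then 1 else 0)"
  proof (cases "x \<in> S")
    case True
    then have "{#R \<in># M. R = S \<and> x \<in> R#} \<noteq> {#}" using assms(2) by auto
    then have "size {#R \<in># M. R = S \<and> x \<in> R#} \<ge> 1"
      by (metis less_one not_le size_eq_0_iff_empty)
    moreover have "size {#R \<in># M. x \<in> R#} \<le> 1" using total by simp
    ultimately have "size {#R \<in># M. R \<noteq> S \<and> x \<in> R#} = 0" using split by linarith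
    with True show ?thesis by simp
  next
    case False
    then have "{#R \<in># M. R = S \<and> x \<in> R#} = {#}" by auto
    then show ?thesis using split total False by simp
  qed
qed

definition atoms :: "'p \<Rightarrow> 'f trm list \<Rightarrow> 'r set multiset \<Rightarrow> ('r, 'f, 'p) sequent" where
  "atoms p ts M = image_mset (\<lambda>R. (R, Atom p ts)) M"

lemma atoms_simps [simp]:
  "atoms p ts {#} = {#}"
  "atoms p ts (add_mset R M) = add_mset (R, Atom p ts) (atoms p ts M)"
  "atoms p ts (M + N) = atoms p ts M + atoms p ts N"
  "lift_seq (atoms p ts M) = atoms p (map (lift_trm 0) ts) M"
  by (simp_all add: atoms_def lift_seq_eq multiset.map_comp comp_def)

lemma derivable_atomsI: "partitions M UNIV \<Longrightarrow> atoms p ts M \<subseteq># \<Gamma> \<Longrightarrow> derivable \<Gamma>"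
proof -
  assume "partitions M UNIV" "atoms p ts M \<subseteq># \<Gamma>"
  moreover obtain Rs where M: "M = mset Rs" using ex_mset by metis
  ultimately have "derivable (\<Gamma> - atoms p ts M + mset (map (\<lambda>R. (R, Atom p ts)) Rs))"
    by (intro derivable.Id) (simp_all add: partitions_mset_UNIV_iff)
  then show "derivable \<Gamma>"
    using \<open>atoms p ts M \<subseteq># \<Gamma>\<close> by (simp add: M atoms_def subset_mset.diff_add)
qed

lemma atoms_filter_subset:
  assumes "\<Gamma> + atoms p ts M = \<Delta> + replicate_mset m Y"
  shows "atoms p ts {#R \<in># M. (R, Atom p ts) \<noteq> Y#} \<subseteq># \<Delta>"
  unfolding subseteq_mset_def
proof
  fix X
  have "count (atoms p ts M) X \<le> count \<Delta> X + (if X = Y then m else 0)"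
    using arg_cong[OF assms, of "\<lambda>N. count N X"] by simp
  moreover have "atoms p ts {#R \<in># M. (R, Atom p ts) \<noteq> Y#} = {#X \<in># atoms p ts M. X \<noteq> Y#}"
    by (simp add: atoms_def filter_mset_image_mset)
  ultimately show "count (atoms p ts {#R \<in># M. (R, Atom p ts) \<noteq> Y#}) X \<le> count \<Delta> X"
    by auto
qed

lemma derivable_Id_non_atomic:
  assumes "\<Gamma> + atoms p ts M = \<Delta> + replicate_mset m Y" and "partitions M UNIV"
    and "\<forall>p ts. snd Y \<noteq> Atom p ts" and "\<Delta> \<subseteq># \<Delta>'"
  shows "derivable \<Delta>'"
proof -
  have "(R, Atom p ts) \<noteq> Y" for R using assms(3) by auto
  then have "{#R \<in># M. (R, Atom p ts) \<noteq> Y#} = M" by simp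
  then have "derivable \<Delta>" using atoms_filter_subset[OF assms(1)] by (intro derivable_atomsI[OF assms(2)]) simp
  then show ?thesis using assms(4) by (rule derivable_mono)
qed

section \<open>Tracing an occurrence through a derivation\<close>

lemma single_eq_plus_replicate_mset_cases:
  assumes "\<Gamma> + {#X#} = \<Delta> + replicate_mset m Y"
  obtains (principal) "X = Y" "0 < m" "\<Gamma> = \<Delta> + replicate_mset (m - 1) Y"
    | (side) \<Delta>' where "\<Delta> = add_mset X \<Delta>'" "\<Gamma> = \<Delta>' + replicate_mset m Y"
proof (cases "X = Y \<and> 0 < m")
  case True
  then obtain k where "m = Suc k" by (cases m) auto
  with True assms show ?thesis by (intro principal) simp_all
next
  case False
  then have "X \<in># \<Delta>" using assms
    by (metis add_mset_add_single in_replicate_mset union_iff union_single_eq_member)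
  then obtain \<Delta>' where \<Delta>: "\<Delta> = add_mset X \<Delta>'" by (metis multi_member_split)
  with assms have "\<Gamma> = \<Delta>' + replicate_mset m Y" by simp
  with \<Delta> show ?thesis by (rule side)
qed

lemma plus_eq_plus_replicate_mset_split:
  assumes "\<Gamma>1 + \<Gamma>2 = \<Delta> + replicate_mset m Y"
  obtains \<Delta>1 \<Delta>2 m1 m2 where "\<Gamma>1 = \<Delta>1 + replicate_mset m1 Y" "\<Gamma>2 = \<Delta>2 + replicate_mset m2 Y"
    "\<Delta> = \<Delta>1 + \<Delta>2"
proof -
  define m1 where "m1 = min (count \<Gamma>1 Y) m"
  define m2 where "m2 = m - m1"
  have "count \<Gamma>1 Y + count \<Gamma>2 Y = count \<Delta> Y + m"
    using arg_cong[OF assms, of "\<lambda>M. count M Y"] by simp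
  then have "replicate_mset m1 Y \<subseteq># \<Gamma>1" "replicate_mset m2 Y \<subseteq># \<Gamma>2"
    by (simp_all add: m1_def m2_def count_le_replicate_mset_subset_eq[symmetric])
  define \<Delta>1 where "\<Delta>1 = \<Gamma>1 - replicate_mset m1 Y"
  define \<Delta>2 where "\<Delta>2 = \<Gamma>2 - replicate_mset m2 Y"
  have \<Gamma>: "\<Gamma>1 = \<Delta>1 + replicate_mset m1 Y" "\<Gamma>2 = \<Delta>2 + replicate_mset m2 Y"
    using \<open>replicate_mset m1 Y \<subseteq># \<Gamma>1\<close> \<open>replicate_mset m2 Y \<subseteq># \<Gamma>2\<close>
    by (simp_all add: \<Delta>1_def \<Delta>2_def)
  have "replicate_mset m Y = replicate_mset m1 Y + replicate_mset m2 Y"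
    by (simp add: m1_def m2_def multiset_eq_iff)
  then have "\<Delta> = \<Delta>1 + \<Delta>2"
    using assms \<Gamma> by (metis add.assoc add.commute add_right_imp_eq)
  with \<Gamma> show ?thesis by (rule that)
qed

text \<open>Occurrences of an i-formula Y in a derivable sequent may be replaced by a sequent F as
  soon as the axioms and the rules with Y principal are compatible with the replacement: all other
  rules commute with it. Y is counted with multiplicity, since contraction duplicates it.\<close>

lemma derivable_replace:
  fixes Rel :: "'r set \<times> ('r, 'f, 'p) fm \<Rightarrow> ('r, 'f, 'p) sequent \<Rightarrow> bool"
  assumes "derivable (\<Gamma> + {#Y#})" and "Rel Y F"
    and lift: "\<And>Y F. Rel Y F \<Longrightarrow> Rel (apsnd (lift_fm 0) Y) (lift_seq F)"
    and axiom: "\<And>R q us F \<Gamma> M p ts \<Delta> m. Rel (R, Atom q us) F \<Longrightarrow> partitions M UNIV \<Longrightarrow>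
      \<Gamma> + atoms p ts M = \<Delta> + replicate_mset m (R, Atom q us) \<Longrightarrow> derivable (\<Delta> + F)"
    and neg: "\<And>R f A F \<Delta>. Rel (R, Neg f A) F \<Longrightarrow>
      derivable (add_mset (f -` R, A) (\<Delta> + F)) \<Longrightarrow> derivable (\<Delta> + F)"
    and conj_neg_l: "\<And>R U A B F \<Delta>. Rel (R, Conj U A B) F \<Longrightarrow> R \<notin> U \<Longrightarrow>
      derivable (add_mset (R, A) (\<Delta> + F)) \<Longrightarrow> derivable (\<Delta> + F)"
    and conj_neg_r: "\<And>R U A B F \<Delta>. Rel (R, Conj U A B) F \<Longrightarrow> R \<notin> U \<Longrightarrow>
      derivable (add_mset (R, B) (\<Delta> + F)) \<Longrightarrow> derivable (\<Delta> + F)"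
    and conj_pos: "\<And>R U A B F \<Delta>. Rel (R, Conj U A B) F \<Longrightarrow> R \<in> U \<Longrightarrow>
      derivable (add_mset (R, A) (\<Delta> + F)) \<Longrightarrow> derivable (add_mset (R, B) (\<Delta> + F)) \<Longrightarrow>
      derivable (\<Delta> + F)"
    and imp_neg: "\<And>R f U A B F \<Delta>. Rel (R, Imp f U A B) F \<Longrightarrow> R \<notin> U \<Longrightarrow>
      derivable (add_mset (f -` R, A) (add_mset (R, B) (\<Delta> + F))) \<Longrightarrow> derivable (\<Delta> + F)"
    and imp_pos: "\<And>R f U A B F \<Delta>1 \<Delta>2. Rel (R, Imp f U A B) F \<Longrightarrow> R \<in> U \<Longrightarrow>
      derivable (add_mset (f -` R, A) (\<Delta>1 + F)) \<Longrightarrow> derivable (add_mset (R, B) (\<Delta>2 + F)) \<Longrightarrow>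
      derivable (\<Delta>1 + \<Delta>2 + F)"
    and forall_neg: "\<And>R U A F t \<Delta>. Rel (R, Forall U A) F \<Longrightarrow> R \<notin> U \<Longrightarrow>
      derivable (add_mset (R, subst_fm 0 t A) (\<Delta> + F)) \<Longrightarrow> derivable (\<Delta> + F)"
    and forall_pos: "\<And>R U A F \<Delta>. Rel (R, Forall U A) F \<Longrightarrow> R \<in> U \<Longrightarrow>
      derivable (add_mset (R, A) (lift_seq (\<Delta> + F))) \<Longrightarrow> derivable (\<Delta> + F)"
  shows "derivable (\<Gamma> + F)"
proof -
  have "derivable (\<Delta> + F)" if "derivable S" "S = \<Delta> + replicate_mset m Y" "Rel Y F" for S \<Delta> m Y F
    using that
  proof (induction arbitrary: \<Delta> m Y F rule: derivable.induct)
    case (Id Rs \<Gamma> p ts)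
    have M: "partitions (mset Rs) UNIV" using Id.hyps by (simp add: partitions_mset_UNIV_iff)
    have eq: "\<Gamma> + atoms p ts (mset Rs) = \<Delta> + replicate_mset m Y"
      using Id.prems(1) by (simp add: atoms_def)
    show ?case
    proof (cases "\<forall>q us. snd Y \<noteq> Atom q us")
      case True
      then show ?thesis by (intro derivable_Id_non_atomic[OF eq M]) simp_all
    next
      case False
      then obtain R q us where "Y = (R, Atom q us)" by (cases Y) auto
      then show ?thesis using axiom[OF _ M] eq Id.prems(2) by blast
    qed
  next
    case (Weaken \<Gamma> R A)
    from Weaken.prems(1) show ?case
    proof (cases rule: single_eq_plus_replicate_mset_cases)
      case principal
      then have "\<Gamma> + {#(R, A), (R, A)#} = \<Delta> + replicate_mset (Suc m) Y" by (cases m) auto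
      then show ?thesis by (rule Weaken.IH[OF _ Weaken.prems(2)])
    next
      case (side \<Delta>')
      then have "\<Gamma> + {#(R, A), (R, A)#} = add_mset (R, A) \<Delta> + replicate_mset m Y" by simp
      then have "derivable (add_mset (R, A) \<Delta> + F)" by (rule Weaken.IH[OF _ Weaken.prems(2)])
      then show ?thesis using derivable.Weaken[of "\<Delta>' + F" R A] side(1) by simp
    qed
  next
    case (NegR \<Gamma> f R A)
    from NegR.prems(1) show ?case
    proof (cases rule: single_eq_plus_replicate_mset_cases)
      case principal
      then have "\<Gamma> + {#(f -` R, A)#} = add_mset (f -` R, A) \<Delta> + replicate_mset (m - 1) Y" by simp
      then have "derivable (add_mset (f -` R, A) \<Delta> + F)" by (rule NegR.IH[OF _ NegR.prems(2)])
      then show ?thesis using neg[of R f A F \<Delta>] NegR.prems(2) principal(1) by simp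
    next
      case (side \<Delta>')
      then have "\<Gamma> + {#(f -` R, A)#} = add_mset (f -` R, A) \<Delta>' + replicate_mset m Y" by simp
      then have "derivable (add_mset (f -` R, A) \<Delta>' + F)" by (rule NegR.IH[OF _ NegR.prems(2)])
      then show ?thesis using derivable.NegR[of "\<Delta>' + F" f R A] side(1) by simp
    qed
  next
    case (ConjNegL R U \<Gamma> A B)
    from ConjNegL.prems(1) show ?case
    proof (cases rule: single_eq_plus_replicate_mset_cases)
      case principal
      then have "\<Gamma> + {#(R, A)#} = add_mset (R, A) \<Delta> + replicate_mset (m - 1) Y" by simp
      then have "derivable (add_mset (R, A) \<Delta> + F)" by (rule ConjNegL.IH[OF _ ConjNegL.prems(2)])
      then show ?thesis using conj_neg_l[of R U A B F \<Delta>] ConjNegL.prems(2) ConjNegL.hyps(1) principal(1) by simp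
    next
      case (side \<Delta>')
      then have "\<Gamma> + {#(R, A)#} = add_mset (R, A) \<Delta>' + replicate_mset m Y" by simp
      then have "derivable (add_mset (R, A) \<Delta>' + F)" by (rule ConjNegL.IH[OF _ ConjNegL.prems(2)])
      then show ?thesis using derivable.ConjNegL[OF ConjNegL.hyps(1), of "\<Delta>' + F" A B] side(1)
        by simp
    qed
  next
    case (ConjNegR R U \<Gamma> B A)
    from ConjNegR.prems(1) show ?case
    proof (cases rule: single_eq_plus_replicate_mset_cases)
      case principal
      then have "\<Gamma> + {#(R, B)#} = add_mset (R, B) \<Delta> + replicate_mset (m - 1) Y" by simp
      then have "derivable (add_mset (R, B) \<Delta> + F)" by (rule ConjNegR.IH[OF _ ConjNegR.prems(2)])
      then show ?thesis using conj_neg_r[of R U A B F \<Delta>] ConjNegR.prems(2) ConjNegR.hyps(1) principal(1) by simp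
    next
      case (side \<Delta>')
      then have "\<Gamma> + {#(R, B)#} = add_mset (R, B) \<Delta>' + replicate_mset m Y" by simp
      then have "derivable (add_mset (R, B) \<Delta>' + F)" by (rule ConjNegR.IH[OF _ ConjNegR.prems(2)])
      then show ?thesis using derivable.ConjNegR[OF ConjNegR.hyps(1), of "\<Delta>' + F" B A] side(1)
        by simp
    qed
  next
    case (ConjPos R U \<Gamma> A B)
    from ConjPos.prems(1) show ?case
    proof (cases rule: single_eq_plus_replicate_mset_cases)
      case principal
      then have "\<Gamma> + {#(R, A)#} = add_mset (R, A) \<Delta> + replicate_mset (m - 1) Y"
        "\<Gamma> + {#(R, B)#} = add_mset (R, B) \<Delta> + replicate_mset (m - 1) Y" by simp_all
      then have "derivable (add_mset (R, A) \<Delta> + F)" "derivable (add_mset (R, B) \<Delta> + F)"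
        using ConjPos.IH[OF _ ConjPos.prems(2)] by blast+
      then show ?thesis using conj_pos[of R U A B F \<Delta>] ConjPos.prems(2) ConjPos.hyps(1) principal(1) by simp
    next
      case (side \<Delta>')
      then have "\<Gamma> + {#(R, A)#} = add_mset (R, A) \<Delta>' + replicate_mset m Y"
        "\<Gamma> + {#(R, B)#} = add_mset (R, B) \<Delta>' + replicate_mset m Y" by simp_all
      then have "derivable (add_mset (R, A) \<Delta>' + F)" "derivable (add_mset (R, B) \<Delta>' + F)"
        using ConjPos.IH[OF _ ConjPos.prems(2)] by blast+
      then show ?thesis using derivable.ConjPos[OF ConjPos.hyps(1), of "\<Delta>' + F" A B] side(1)
        by simp
    qed
  next
    case (ImpNeg R U \<Gamma> f A B)
    from ImpNeg.prems(1) show ?case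
    proof (cases rule: single_eq_plus_replicate_mset_cases)
      case principal
      then have "\<Gamma> + {#(f -` R, A), (R, B)#}
          = add_mset (f -` R, A) (add_mset (R, B) \<Delta>) + replicate_mset (m - 1) Y" by simp
      then have "derivable (add_mset (f -` R, A) (add_mset (R, B) \<Delta>) + F)"
        by (rule ImpNeg.IH[OF _ ImpNeg.prems(2)])
      then show ?thesis using imp_neg[of R f U A B F \<Delta>] ImpNeg.prems(2) ImpNeg.hyps(1) principal(1) by simp
    next
      case (side \<Delta>')
      then have "\<Gamma> + {#(f -` R, A), (R, B)#}
          = add_mset (f -` R, A) (add_mset (R, B) \<Delta>') + replicate_mset m Y" by simp
      then have "derivable (add_mset (f -` R, A) (add_mset (R, B) \<Delta>') + F)"
        by (rule ImpNeg.IH[OF _ ImpNeg.prems(2)])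
      then show ?thesis using derivable.ImpNeg[OF ImpNeg.hyps(1), of "\<Delta>' + F" f A B] side(1)
        by simp
    qed
  next
    case (ImpPos R U \<Gamma>1 f A \<Gamma>2 B)
    from ImpPos.prems(1) show ?case
    proof (cases rule: single_eq_plus_replicate_mset_cases)
      case principal
      obtain \<Delta>1 \<Delta>2 m1 m2 where \<Delta>: "\<Gamma>1 = \<Delta>1 + replicate_mset m1 Y"
        "\<Gamma>2 = \<Delta>2 + replicate_mset m2 Y" "\<Delta> = \<Delta>1 + \<Delta>2"
        by (rule plus_eq_plus_replicate_mset_split[OF principal(3)])
      then have "\<Gamma>1 + {#(f -` R, A)#} = add_mset (f -` R, A) \<Delta>1 + replicate_mset m1 Y"
        "\<Gamma>2 + {#(R, B)#} = add_mset (R, B) \<Delta>2 + replicate_mset m2 Y" by simp_all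
      then have "derivable (add_mset (f -` R, A) \<Delta>1 + F)" "derivable (add_mset (R, B) \<Delta>2 + F)"
        using ImpPos.IH[OF _ ImpPos.prems(2)] by blast+
      then show ?thesis using imp_pos[of R f U A B F \<Delta>1 \<Delta>2] ImpPos.prems(2) ImpPos.hyps(1) principal(1) \<Delta>(3) by simp
    next
      case (side \<Delta>')
      obtain \<Delta>1 \<Delta>2 m1 m2 where \<Delta>: "\<Gamma>1 = \<Delta>1 + replicate_mset m1 Y"
        "\<Gamma>2 = \<Delta>2 + replicate_mset m2 Y" "\<Delta>' = \<Delta>1 + \<Delta>2"
        by (rule plus_eq_plus_replicate_mset_split[OF side(2)])
      then have "\<Gamma>1 + {#(f -` R, A)#} = add_mset (f -` R, A) \<Delta>1 + replicate_mset m1 Y"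
        "\<Gamma>2 + {#(R, B)#} = add_mset (R, B) \<Delta>2 + replicate_mset m2 Y" by simp_all
      then have "derivable (add_mset (f -` R, A) \<Delta>1 + F)" "derivable (add_mset (R, B) \<Delta>2 + F)"
        using ImpPos.IH[OF _ ImpPos.prems(2)] by blast+
      then have "derivable (\<Delta>1 + F + (\<Delta>2 + F) + {#(R, Imp f U A B)#})"
        using derivable.ImpPos[OF ImpPos.hyps(1), of "\<Delta>1 + F" f A "\<Delta>2 + F" B] by simp
      then show ?thesis by (rule derivable_set_mono) (auto simp: side(1) \<Delta>(3))
    qed
  next
    case (ForallNeg R U \<Gamma> t A)
    from ForallNeg.prems(1) show ?case
    proof (cases rule: single_eq_plus_replicate_mset_cases)
      case principal
      then have "\<Gamma> + {#(R, subst_fm 0 t A)#}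
          = add_mset (R, subst_fm 0 t A) \<Delta> + replicate_mset (m - 1) Y" by simp
      then have "derivable (add_mset (R, subst_fm 0 t A) \<Delta> + F)"
        by (rule ForallNeg.IH[OF _ ForallNeg.prems(2)])
      then show ?thesis using forall_neg[of R U A F t \<Delta>] ForallNeg.prems(2) ForallNeg.hyps(1) principal(1) by simp
    next
      case (side \<Delta>')
      then have "\<Gamma> + {#(R, subst_fm 0 t A)#}
          = add_mset (R, subst_fm 0 t A) \<Delta>' + replicate_mset m Y" by simp
      then have "derivable (add_mset (R, subst_fm 0 t A) \<Delta>' + F)"
        by (rule ForallNeg.IH[OF _ ForallNeg.prems(2)])
      then show ?thesis using derivable.ForallNeg[OF ForallNeg.hyps(1), of "\<Delta>' + F" t A] side(1)
        by simp
    qed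
  next
    case (ForallPos R U \<Gamma> A)
    have lifted: "Rel (apsnd (lift_fm 0) Y) (lift_seq F)" using lift ForallPos.prems(2) .
    from ForallPos.prems(1) show ?case
    proof (cases rule: single_eq_plus_replicate_mset_cases)
      case principal
      then have "lift_seq \<Gamma> + {#(R, A)#}
          = add_mset (R, A) (lift_seq \<Delta>) + replicate_mset (m - 1) (apsnd (lift_fm 0) Y)" by simp
      then have "derivable (add_mset (R, A) (lift_seq \<Delta>) + lift_seq F)"
        by (rule ForallPos.IH[OF _ lifted])
      then show ?thesis using forall_pos[of R U A F \<Delta>] ForallPos.prems(2) ForallPos.hyps(1) principal(1) by simp
    next
      case (side \<Delta>')
      then have "lift_seq \<Gamma> + {#(R, A)#}
          = add_mset (R, A) (lift_seq \<Delta>') + replicate_mset m (apsnd (lift_fm 0) Y)" by simp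
      then have "derivable (add_mset (R, A) (lift_seq \<Delta>') + lift_seq F)"
        by (rule ForallPos.IH[OF _ lifted])
      then show ?thesis using derivable.ForallPos[OF ForallPos.hyps(1), of "\<Delta>' + F" A] side(1)
        by simp
    qed
  qed
  from this[OF assms(1) _ assms(2), of \<Gamma> 1] show ?thesis by simp
qed

section \<open>Invertibility\<close>

lemma derivable_NegR_inv:
  fixes \<Gamma> :: "('r, 'f, 'p) sequent"
  assumes "derivable (\<Gamma> + {#(R, Neg f A)#})"
  shows "derivable (\<Gamma> + {#(f -` R, A)#})"
proof -
  define Rel :: "'r set \<times> ('r, 'f, 'p) fm \<Rightarrow> ('r, 'f, 'p) sequent \<Rightarrow> bool"
    where "Rel Y F \<longleftrightarrow> (\<exists>R f A. Y = (R, Neg f A) \<and> F = {#(f -` R, A)#})" for Y F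
  from assms show ?thesis
    by (rule derivable_replace[where Rel = Rel])
      (auto simp: Rel_def elim: derivable_add_mset_absorb)
qed

lemma derivable_ConjNeg_inv:
  fixes \<Gamma> :: "('r, 'f, 'p) sequent"
  assumes "derivable (\<Gamma> + {#(R, Conj U A B)#})" and "R \<notin> U"
  shows "derivable (\<Gamma> + {#(R, A), (R, B)#})"
proof -
  define Rel :: "'r set \<times> ('r, 'f, 'p) fm \<Rightarrow> ('r, 'f, 'p) sequent \<Rightarrow> bool"
    where "Rel Y F \<longleftrightarrow> (\<exists>R U A B. R \<notin> U \<and> Y = (R, Conj U A B) \<and> F = {#(R, A), (R, B)#})" for Y F
  from assms(1) show ?thesis
    by (rule derivable_replace[where Rel = Rel])
      (use assms(2) in \<open>auto simp: Rel_def elim: derivable_add_mset_absorb\<close>)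
qed

lemma derivable_ConjPos_invL:
  fixes \<Gamma> :: "('r, 'f, 'p) sequent"
  assumes "derivable (\<Gamma> + {#(R, Conj U A B)#})" and "R \<in> U"
  shows "derivable (\<Gamma> + {#(R, A)#})"
proof -
  define Rel :: "'r set \<times> ('r, 'f, 'p) fm \<Rightarrow> ('r, 'f, 'p) sequent \<Rightarrow> bool"
    where "Rel Y F \<longleftrightarrow> (\<exists>R U A B. R \<in> U \<and> Y = (R, Conj U A B) \<and> F = {#(R, A)#})" for Y F
  from assms(1) show ?thesis
    by (rule derivable_replace[where Rel = Rel])
      (use assms(2) in \<open>auto simp: Rel_def elim: derivable_add_mset_absorb\<close>)
qed

lemma derivable_ConjPos_invR:
  fixes \<Gamma> :: "('r, 'f, 'p) sequent"
  assumes "derivable (\<Gamma> + {#(R, Conj U A B)#})" and "R \<in> U"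
  shows "derivable (\<Gamma> + {#(R, B)#})"
proof -
  define Rel :: "'r set \<times> ('r, 'f, 'p) fm \<Rightarrow> ('r, 'f, 'p) sequent \<Rightarrow> bool"
    where "Rel Y F \<longleftrightarrow> (\<exists>R U A B. R \<in> U \<and> Y = (R, Conj U A B) \<and> F = {#(R, B)#})" for Y F
  from assms(1) show ?thesis
    by (rule derivable_replace[where Rel = Rel])
      (use assms(2) in \<open>auto simp: Rel_def elim: derivable_add_mset_absorb\<close>)
qed

lemma derivable_ImpNeg_inv:
  fixes \<Gamma> :: "('r, 'f, 'p) sequent"
  assumes "derivable (\<Gamma> + {#(R, Imp f U A B)#})" and "R \<notin> U"
  shows "derivable (\<Gamma> + {#(f -` R, A), (R, B)#})"
proof -
  define Rel :: "'r set \<times> ('r, 'f, 'p) fm \<Rightarrow> ('r, 'f, 'p) sequent \<Rightarrow> bool"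
    where "Rel Y F \<longleftrightarrow> (\<exists>R f U A B. R \<notin> U \<and> Y = (R, Imp f U A B) \<and> F = {#(f -` R, A), (R, B)#})"
    for Y F
  from assms(1) show ?thesis
    by (rule derivable_replace[where Rel = Rel])
      (use assms(2) in \<open>auto simp: Rel_def elim!: derivable_set_mono\<close>)
qed

lemma derivable_ImpPos_invL:
  fixes \<Gamma> :: "('r, 'f, 'p) sequent"
  assumes "derivable (\<Gamma> + {#(R, Imp f U A B)#})" and "R \<in> U"
  shows "derivable (\<Gamma> + {#(f -` R, A)#})"
proof -
  define Rel :: "'r set \<times> ('r, 'f, 'p) fm \<Rightarrow> ('r, 'f, 'p) sequent \<Rightarrow> bool"
    where "Rel Y F \<longleftrightarrow> (\<exists>R f U A B. R \<in> U \<and> Y = (R, Imp f U A B) \<and> F = {#(f -` R, A)#})" for Y F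
  from assms(1) show ?thesis
    by (rule derivable_replace[where Rel = Rel])
      (use assms(2) in \<open>auto simp: Rel_def elim!: derivable_set_mono\<close>)
qed

lemma derivable_ImpPos_invR:
  fixes \<Gamma> :: "('r, 'f, 'p) sequent"
  assumes "derivable (\<Gamma> + {#(R, Imp f U A B)#})" and "R \<in> U"
  shows "derivable (\<Gamma> + {#(R, B)#})"
proof -
  define Rel :: "'r set \<times> ('r, 'f, 'p) fm \<Rightarrow> ('r, 'f, 'p) sequent \<Rightarrow> bool"
    where "Rel Y F \<longleftrightarrow> (\<exists>R f U A B. R \<in> U \<and> Y = (R, Imp f U A B) \<and> F = {#(R, B)#})" for Y F
  from assms(1) show ?thesis
    by (rule derivable_replace[where Rel = Rel])
      (use assms(2) in \<open>auto simp: Rel_def elim: derivable_set_mono\<close>)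
qed

lemma derivable_ForallPos_inv:
  fixes \<Gamma> :: "('r, 'f, 'p) sequent"
  assumes "derivable (\<Gamma> + {#(R, Forall U A)#})" and "R \<in> U"
  shows "derivable (\<Gamma> + {#(R, subst_fm 0 t A)#})"
proof -
  define Rel :: "'r set \<times> ('r, 'f, 'p) fm \<Rightarrow> ('r, 'f, 'p) sequent \<Rightarrow> bool"
    where "Rel Y F \<longleftrightarrow> (\<exists>R U A t. R \<in> U \<and> Y = (R, Forall U A) \<and> F = {#(R, subst_fm 0 t A)#})"
    for Y F
  have lift: "Rel (apsnd (lift_fm 0) Y) (lift_seq F)" if "Rel Y F" for Y F
  proof -
    from that obtain R U A t where "R \<in> U" "Y = (R, Forall U A)" "F = {#(R, subst_fm 0 t A)#}"
      unfolding Rel_def by blast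
    then show ?thesis
      unfolding Rel_def by (intro exI[of _ R] exI[of _ U] exI[of _ "lift_fm 1 A"] exI[of _ "lift_trm 0 t"])
        (simp add: lift_subst_fm_ge)
  qed
  have forall_pos: "derivable (\<Delta> + F)"
    if "Rel (R, Forall U A) F" and "derivable (add_mset (R, A) (lift_seq (\<Delta> + F)))" for R U A F \<Delta>
  proof -
    from that(1) obtain t where F: "F = {#(R, subst_fm 0 t A)#}" unfolding Rel_def by blast
    from derivable_subst[OF that(2), of t] have "derivable (add_mset (R, subst_fm 0 t A) (\<Delta> + F))"
      by (simp add: subst_lift_seq)
    then show ?thesis by (rule derivable_add_mset_absorb) (simp add: F)
  qed
  from assms(1) show ?thesis
    by (rule derivable_replace[where Rel = Rel, OF _ _ lift _ _ _ _ _ _ _ _ forall_pos])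
      (use assms(2) in \<open>auto simp: Rel_def\<close>)
qed

section \<open>Atomic cuts\<close>

lemma atoms_residue:
  assumes "\<Gamma> + atoms q us M = \<Delta> + replicate_mset m (R, Atom p ts)" and "partitions M UNIV"
  obtains "derivable \<Delta>" | Ts where "partitions Ts (- R)" and "atoms p ts Ts \<subseteq># \<Delta>"
proof (cases "(q, us) = (p, ts) \<and> R \<in># M")
  case True
  then have "partitions {#S \<in># M. S \<noteq> R#} (- R)"
    using partitions_remove[OF assms(2)] by (simp add: Compl_eq_Diff_UNIV)
  moreover have "atoms p ts {#S \<in># M. S \<noteq> R#} \<subseteq># \<Delta>" using atoms_filter_subset[OF assms(1)] True by simp
  ultimately show ?thesis by (rule that(2))
next
  case False
  then have "{#S \<in># M. (S, Atom q us) \<noteq> (R, Atom p ts)#} = M" by (auto simp: filter_mset_eq_conv)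
  then have "derivable \<Delta>"
    using atoms_filter_subset[OF assms(1)] by (intro derivable_atomsI[OF assms(2)]) simp
  then show ?thesis by (rule that(1))
qed

lemma derivable_split_atom:
  fixes \<Gamma> :: "('r, 'f, 'p) sequent"
  assumes "derivable (\<Gamma> + {#(T, Atom p ts)#})" and "partitions Ss T"
  shows "derivable (\<Gamma> + atoms p ts Ss)"
proof -
  define Rel :: "'r set \<times> ('r, 'f, 'p) fm \<Rightarrow> ('r, 'f, 'p) sequent \<Rightarrow> bool"
    where "Rel Y F \<longleftrightarrow> (\<exists>T p ts Ss. Y = (T, Atom p ts) \<and> F = atoms p ts Ss \<and> partitions Ss T)"
    for Y F
  have axiom: "derivable (\<Delta> + F)" if "Rel (T, Atom p ts) F" and "partitions M UNIV"
    and "\<Gamma>' + atoms q us M = \<Delta> + replicate_mset m (T, Atom p ts)" for T p ts F M \<Gamma>' q us \<Delta> m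
  proof -
    from that(1) obtain Ss where F: "F = atoms p ts Ss" "partitions Ss T" unfolding Rel_def by blast
    from that(3,2) show ?thesis
    proof (cases rule: atoms_residue)
      case 1
      then show ?thesis by (rule derivable_add)
    next
      case (2 Ts)
      have "partitions (Ts + Ss) UNIV" using partitions_add[OF 2(1) F(2)] by simp
      moreover have "atoms p ts (Ts + Ss) \<subseteq># \<Delta> + F" using 2(2) F(1) by simp
      ultimately show ?thesis by (rule derivable_atomsI)
    qed
  qed
  from assms(1) show ?thesis
    by (rule derivable_replace[where Rel = Rel, OF _ _ _ axiom]) (use assms(2) in \<open>auto simp: Rel_def\<close>)
qed

lemma derivable_merge_atom:
  fixes \<Gamma>0 :: "('r, 'f, 'p) sequent"
  assumes "derivable (\<Gamma>0 + {#(R0, Atom p ts)#})" and "derivable (\<Gamma>1 + {#(R1, Atom p ts)#})"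
    and "- R0 \<inter> - R1 = {}"
  shows "derivable (\<Gamma>0 + \<Gamma>1 + {#(R0 \<inter> R1, Atom p ts)#})"
proof -
  define Rel :: "'r set \<times> ('r, 'f, 'p) fm \<Rightarrow> ('r, 'f, 'p) sequent \<Rightarrow> bool"
    where "Rel Y F \<longleftrightarrow> (\<exists>R0 p ts \<Gamma>1 R1. Y = (R0, Atom p ts) \<and> F = \<Gamma>1 + {#(R0 \<inter> R1, Atom p ts)#}
      \<and> - R0 \<inter> - R1 = {} \<and> derivable (\<Gamma>1 + {#(R1, Atom p ts)#}))" for Y F
  have lift: "Rel (apsnd (lift_fm 0) Y) (lift_seq F)" if "Rel Y F" for Y F
  proof -
    from that obtain R0 p ts \<Gamma>1 R1 where "Y = (R0, Atom p ts)" "F = \<Gamma>1 + {#(R0 \<inter> R1, Atom p ts)#}"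
      "- R0 \<inter> - R1 = {}" "derivable (\<Gamma>1 + {#(R1, Atom p ts)#})"
      unfolding Rel_def by blast
    then show ?thesis unfolding Rel_def using derivable_lift_seq by fastforce
  qed
  have axiom: "derivable (\<Delta> + F)" if "Rel (R, Atom p ts) F" and "partitions M UNIV"
    and "\<Gamma>' + atoms q us M = \<Delta> + replicate_mset m (R, Atom p ts)" for R p ts F M \<Gamma>' q us \<Delta> m
  proof -
    from that(1) obtain \<Gamma>1 R1 where F: "F = \<Gamma>1 + {#(R \<inter> R1, Atom p ts)#}" and "- R \<inter> - R1 = {}"
      and \<Gamma>1: "derivable (\<Gamma>1 + {#(R1, Atom p ts)#})" unfolding Rel_def by blast
    from that(3,2) show ?thesis
    proof (cases rule: atoms_residue)
      case 1
      then show ?thesis by (rule derivable_add)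
    next
      case (2 Ts)
      have "partitions (Ts + {#R1 \<inter> R#}) (- R \<union> (R1 \<inter> R))"
        using partitions_add[OF 2(1) partitions_single] by blast
      moreover have "- R \<union> (R1 \<inter> R) = R1" using \<open>- R \<inter> - R1 = {}\<close> by blast
      ultimately have "derivable (\<Gamma>1 + atoms p ts (Ts + {#R1 \<inter> R#}))"
        using derivable_split_atom[OF \<Gamma>1, of "Ts + {#R1 \<inter> R#}"] by simp
      moreover have "\<Gamma>1 + atoms p ts (Ts + {#R1 \<inter> R#}) \<subseteq># \<Delta> + F"
        using 2(2) by (simp add: F Int_commute add.commute)
      ultimately show ?thesis by (rule derivable_mono)
    qed
  qed
  have "Rel (R0, Atom p ts) (\<Gamma>1 + {#(R0 \<inter> R1, Atom p ts)#})" using assms(2,3) unfolding Rel_def by blast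
  with assms(1) have "derivable (\<Gamma>0 + (\<Gamma>1 + {#(R0 \<inter> R1, Atom p ts)#}))"
    by (rule derivable_replace[where Rel = Rel, OF _ _ lift axiom]) (auto simp: Rel_def)
  then show ?thesis by (simp add: add.assoc)
qed

section \<open>Multiparty cut\<close>

definition compl_partition :: "'a set multiset \<Rightarrow> bool" where
  "compl_partition M \<longleftrightarrow> partitions (image_mset uminus M) UNIV"

lemma compl_partition_iff: "compl_partition M \<longleftrightarrow> (\<forall>x. size {#R \<in># M. x \<notin> R#} = 1)"
  by (simp add: compl_partition_def partitions_def filter_mset_image_mset)

lemma compl_partition_single_iff: "compl_partition {#R#} \<longleftrightarrow> R = {}"
  by (auto simp: compl_partition_iff split: if_splits)

lemma compl_partition_nonempty: "compl_partition M \<Longrightarrow> M \<noteq> {#}"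
  by (auto simp: compl_partition_iff)

lemma compl_partition_disjoint:
  assumes "compl_partition (add_mset R1 (add_mset R2 M))"
  shows "- R1 \<inter> - R2 = {}"
proof -
  have "size {#R \<in># add_mset R1 (add_mset R2 M). x \<notin> R#} = 1" for x
    using assms by (simp add: compl_partition_iff)
  then show ?thesis by (fastforce split: if_splits)
qed

lemma compl_partition_merge:
  "compl_partition (add_mset R1 (add_mset R2 M)) \<Longrightarrow> compl_partition (add_mset (R1 \<inter> R2) M)"
  unfolding compl_partition_iff
proof
  fix x
  assume "\<forall>x. size {#R \<in># add_mset R1 (add_mset R2 M). x \<notin> R#} = 1"
  then have "size {#R \<in># add_mset R1 (add_mset R2 M). x \<notin> R#} = 1" ..
  then show "size {#R \<in># add_mset (R1 \<inter> R2) M. x \<notin> R#} = 1"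
    by (cases "x \<in> R1"; cases "x \<in> R2") auto
qed

lemma compl_partition_vimage: "compl_partition M \<Longrightarrow> compl_partition (image_mset (vimage f) M)"
  by (simp add: compl_partition_iff filter_mset_image_mset)

definition ctx_sum :: "('r set \<times> ('r, 'f, 'p) sequent) multiset \<Rightarrow> ('r, 'f, 'p) sequent" where
  "ctx_sum P = sum_mset (image_mset snd P)"

lemma ctx_sum_simps [simp]:
  "ctx_sum {#} = {#}"
  "ctx_sum (add_mset q P) = snd q + ctx_sum P"
  "ctx_sum (image_mset (\<lambda>q. (g q, snd q)) P) = ctx_sum P"
  by (simp_all add: ctx_sum_def multiset.map_comp comp_def)

lemma ctx_sum_lift_seq: "ctx_sum (image_mset (\<lambda>q. (fst q, lift_seq (snd q))) P) = lift_seq (ctx_sum P)"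
  by (induction P) auto

definition cut_admissible :: "('r, 'f, 'p) fm \<Rightarrow> bool" where
  "cut_admissible A \<longleftrightarrow> (\<forall>P. compl_partition (image_mset fst P) \<longrightarrow>
     (\<forall>q \<in># P. derivable (snd q + {#(fst q, A)#})) \<longrightarrow> derivable (ctx_sum P))"

lemma cut_admissibleD:
  "cut_admissible A \<Longrightarrow> compl_partition (image_mset fst P) \<Longrightarrow>
    (\<forall>q \<in># P. derivable (snd q + {#(fst q, A)#})) \<Longrightarrow> derivable (ctx_sum P)"
  unfolding cut_admissible_def by blast

lemma cut_admissibleD_party:
  assumes "cut_admissible A" and "compl_partition (add_mset R (image_mset fst P))"
    and "derivable (\<Gamma> + {#(R, A)#})" and "\<forall>q \<in># P. derivable (snd q + {#(fst q, A)#})"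
  shows "derivable (\<Gamma> + ctx_sum P)"
  using cut_admissibleD[OF assms(1), of "add_mset (R, \<Gamma>) P"] assms(2-4) by simp

lemma cut_admissibleD_vimage:
  assumes "cut_admissible A" and "compl_partition (image_mset fst P)"
    and "\<forall>q \<in># P. derivable (snd q + {#(f -` fst q, A)#})"
  shows "derivable (ctx_sum P)"
  using cut_admissibleD[OF assms(1), of "image_mset (\<lambda>q. (f -` fst q, snd q)) P"]
    compl_partition_vimage[OF assms(2), of f] assms(3)
  by (simp add: multiset.map_comp comp_def)

lemma cut_admissible_Atom: "cut_admissible (Atom p ts :: ('r, 'f, 'p) fm)"
  unfolding cut_admissible_def
proof (intro allI impI)
  fix P :: "('r set \<times> ('r, 'f, 'p) sequent) multiset"
  assume "compl_partition (image_mset fst P)" and "\<forall>q \<in># P. derivable (snd q + {#(fst q, Atom p ts)#})"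
  then show "derivable (ctx_sum P)"
  proof (induction "size P" arbitrary: P rule: less_induct)
    case less
    obtain R0 \<Gamma>0 P' where P: "P = add_mset (R0, \<Gamma>0) P'"
      using compl_partition_nonempty[OF less.prems(1)] by (metis multiset_cases surj_pair image_mset_empty)
    show ?case
    proof (cases P' rule: multiset_cases)
      case empty
      then have "R0 = {}" using less.prems(1) P by (simp add: compl_partition_single_iff)
      then have "derivable (\<Gamma>0 + atoms p ts {#})"
        using less.prems(2) P by (intro derivable_split_atom) (simp_all add: partitions_def)
      then show ?thesis by (simp add: P empty)
    next
      case (add q P'')
      obtain R1 \<Gamma>1 where q: "q = (R1, \<Gamma>1)" by fastforce
      let ?Q = "add_mset (R0 \<inter> R1, \<Gamma>0 + \<Gamma>1) P''"
      have "- R0 \<inter> - R1 = {}" using less.prems(1) by (intro compl_partition_disjoint) (simp add: P add q)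
      then have "derivable (\<Gamma>0 + \<Gamma>1 + {#(R0 \<inter> R1, Atom p ts)#})"
        using less.prems(2) by (intro derivable_merge_atom) (simp_all add: P add q)
      moreover have "compl_partition (image_mset fst ?Q)"
        using compl_partition_merge less.prems(1) by (simp add: P add q)
      ultimately have "derivable (ctx_sum ?Q)"
        using less.prems(2) by (intro less.hyps) (auto simp: P add q)
      then show ?thesis by (simp add: P add q add.assoc)
    qed
  qed
qed

lemma cut_admissible_Neg:
  assumes "cut_admissible A"
  shows "cut_admissible (Neg f A)"
  unfolding cut_admissible_def
  using cut_admissibleD_vimage[OF assms] derivable_NegR_inv by blast

lemma ultrafilter_compl_disjoint:
  assumes "ultrafilter U" and "- R1 \<inter> - R2 = {}"
  shows "R1 \<in> U \<or> R2 \<in> U"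
proof (rule ccontr)
  assume "\<not> (R1 \<in> U \<or> R2 \<in> U)"
  then have "- R1 \<inter> - R2 \<in> U" using assms(1) unfolding ultrafilter_def by blast
  then have "R1 \<in> U" using assms unfolding ultrafilter_def by blast
  with \<open>\<not> (R1 \<in> U \<or> R2 \<in> U)\<close> show False by blast
qed

lemma compl_partition_ultrafilter_cases:
  assumes "ultrafilter U" and "compl_partition (image_mset fst P)"
  obtains "\<forall>q \<in># P. fst q \<in> U"
    | R \<Gamma> P' where "P = add_mset (R, \<Gamma>) P'" and "R \<notin> U" and "\<forall>q \<in># P'. fst q \<in> U"
proof (cases "\<forall>q \<in># P. fst q \<in> U")
  case False
  then obtain R \<Gamma> P' where P: "P = add_mset (R, \<Gamma>) P'" and "R \<notin> U"
    by (metis multi_member_split prod.collapse)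
  moreover have "fst q \<in> U" if "q \<in># P'" for q
  proof -
    obtain P'' where "P' = add_mset q P''" using \<open>q \<in># P'\<close> by (metis multi_member_split)
    then have "- R \<inter> - fst q = {}" using assms(2) P by (intro compl_partition_disjoint) simp
    then show ?thesis using ultrafilter_compl_disjoint[OF assms(1)] \<open>R \<notin> U\<close> by blast
  qed
  ultimately show ?thesis using that(2) by blast
qed (use that(1) in blast)

lemma cut_admissible_Conj:
  fixes A B :: "('r, 'f, 'p) fm"
  assumes "ultrafilter U" and "cut_admissible A" and "cut_admissible B"
  shows "cut_admissible (Conj U A B)"
  unfolding cut_admissible_def
proof (intro allI impI)
  fix P :: "('r set \<times> ('r, 'f, 'p) sequent) multiset"
  assume roles: "compl_partition (image_mset fst P)"
    and parties: "\<forall>q \<in># P. derivable (snd q + {#(fst q, Conj U A B)#})"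
  from assms(1) roles show "derivable (ctx_sum P)"
  proof (cases rule: compl_partition_ultrafilter_cases)
    case 1
    then show ?thesis using parties cut_admissibleD[OF assms(2) roles] derivable_ConjPos_invL by blast
  next
    case (2 R \<Gamma> P')
    have roles': "compl_partition (add_mset R (image_mset fst P'))" using roles 2(1) by simp
    have "derivable (snd q + {#(fst q, Conj U A B)#})" and "fst q \<in> U" if "q \<in># P'" for q
      using parties 2 that by auto
    then have A: "\<forall>q \<in># P'. derivable (snd q + {#(fst q, A)#})"
      and B: "\<forall>q \<in># P'. derivable (snd q + {#(fst q, B)#})"
      using derivable_ConjPos_invL derivable_ConjPos_invR by blast+
    have "derivable (\<Gamma> + {#(R, A), (R, B)#})"
      using parties 2 by (intro derivable_ConjNeg_inv) simp_all
    then have "derivable (\<Gamma> + {#(R, A)#} + {#(R, B)#})" by (simp add: add_mset_commute)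
    then have "derivable (\<Gamma> + {#(R, A)#} + ctx_sum P')"
      by (rule cut_admissibleD_party[OF assms(3) roles' _ B])
    then have "derivable (\<Gamma> + ctx_sum P' + {#(R, A)#})" by (simp add: ac_simps)
    then have "derivable (\<Gamma> + ctx_sum P' + ctx_sum P')"
      by (rule cut_admissibleD_party[OF assms(2) roles' _ A])
    then show ?thesis by (rule derivable_set_mono) (auto simp: 2(1))
  qed
qed

lemma cut_admissible_Imp:
  fixes A B :: "('r, 'f, 'p) fm"
  assumes "ultrafilter U" and "cut_admissible A" and "cut_admissible B"
  shows "cut_admissible (Imp f U A B)"
  unfolding cut_admissible_def
proof (intro allI impI)
  fix P :: "('r set \<times> ('r, 'f, 'p) sequent) multiset"
  assume roles: "compl_partition (image_mset fst P)"
    and parties: "\<forall>q \<in># P. derivable (snd q + {#(fst q, Imp f U A B)#})"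
  from assms(1) roles show "derivable (ctx_sum P)"
  proof (cases rule: compl_partition_ultrafilter_cases)
    case 1
    then show ?thesis
      using parties cut_admissibleD_vimage[OF assms(2) roles] derivable_ImpPos_invL by blast
  next
    case (2 R \<Gamma> P')
    have roles': "compl_partition (add_mset R (image_mset fst P'))" using roles 2(1) by simp
    have "derivable (snd q + {#(fst q, Imp f U A B)#})" and "fst q \<in> U" if "q \<in># P'" for q
      using parties 2 that by auto
    then have A: "\<forall>q \<in># P'. derivable (snd q + {#(f -` fst q, A)#})"
      and B: "\<forall>q \<in># P'. derivable (snd q + {#(fst q, B)#})"
      using derivable_ImpPos_invL derivable_ImpPos_invR by blast+
    have "derivable (\<Gamma> + {#(f -` R, A), (R, B)#})"
      using parties 2 by (intro derivable_ImpNeg_inv) simp_all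
    then have "derivable (\<Gamma> + {#(f -` R, A)#} + {#(R, B)#})" by (simp add: add_mset_commute)
    then have "derivable (\<Gamma> + {#(f -` R, A)#} + ctx_sum P')"
      by (rule cut_admissibleD_party[OF assms(3) roles' _ B])
    then have "derivable (\<Gamma> + ctx_sum P' + {#(f -` R, A)#})" by (simp add: ac_simps)
    moreover have "compl_partition (add_mset (f -` R) (image_mset fst (image_mset (\<lambda>q. (f -` fst q, snd q)) P')))"
      using compl_partition_vimage[OF roles', of f] by (simp add: multiset.map_comp comp_def)
    ultimately have "derivable (\<Gamma> + ctx_sum P' + ctx_sum (image_mset (\<lambda>q. (f -` fst q, snd q)) P'))"
      using A by (intro cut_admissibleD_party[OF assms(2)]) auto
    then show ?thesis by (rule derivable_set_mono) (auto simp: 2(1))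
  qed
qed

lemma derivable_ForallNeg_cut:
  fixes A :: "('r, 'f, 'p) fm"
  assumes IH: "\<And>B :: ('r, 'f, 'p) fm. connectives B \<le> connectives A \<Longrightarrow> wf_fm B \<Longrightarrow> cut_admissible B"
    and "wf_fm A" and "R \<notin> U" and "derivable (\<Gamma> + {#(R, Forall U A)#})"
    and "compl_partition (add_mset R (image_mset fst P))"
    and "\<forall>q \<in># P. fst q \<in> U \<and> derivable (snd q + {#(fst q, Forall U A)#})"
  shows "derivable (\<Gamma> + ctx_sum P)"
proof -
  define Rel :: "'r set \<times> ('r, 'f, 'p) fm \<Rightarrow> ('r, 'f, 'p) sequent \<Rightarrow> bool"
    where "Rel Y F \<longleftrightarrow> (\<exists>R B Q. Y = (R, Forall U B) \<and> R \<notin> U \<and> connectives B = connectives A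
      \<and> wf_fm B \<and> F = ctx_sum Q \<and> compl_partition (add_mset R (image_mset fst Q))
      \<and> (\<forall>q \<in># Q. fst q \<in> U \<and> derivable (snd q + {#(fst q, Forall U B)#})))" for Y F
  have lift: "Rel (apsnd (lift_fm 0) Y) (lift_seq F)" if "Rel Y F" for Y F
  proof -
    from that obtain R B Q where Y: "Y = (R, Forall U B)" and "R \<notin> U"
      and "connectives B = connectives A" "wf_fm B" and F: "F = ctx_sum Q"
      and "compl_partition (add_mset R (image_mset fst Q))"
      and Q: "\<forall>q \<in># Q. fst q \<in> U \<and> derivable (snd q + {#(fst q, Forall U B)#})"
      unfolding Rel_def by blast
    define Q' where "Q' = image_mset (\<lambda>q. (fst q, lift_seq (snd q))) Q"
    have "\<forall>q \<in># Q'. fst q \<in> U \<and> derivable (snd q + {#(fst q, Forall U (lift_fm 1 B))#})"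
      using Q derivable_lift_seq by (fastforce simp: Q'_def)
    moreover have "image_mset fst Q' = image_mset fst Q" by (simp add: Q'_def multiset.map_comp comp_def)
    ultimately show ?thesis unfolding Rel_def
      using \<open>R \<notin> U\<close> \<open>connectives B = connectives A\<close> \<open>wf_fm B\<close>
        \<open>compl_partition (add_mset R (image_mset fst Q))\<close>
      by (intro exI[of _ R] exI[of _ "lift_fm 1 B"] exI[of _ Q'])
        (simp add: Y F Q'_def ctx_sum_lift_seq)
  qed
  have forall_neg: "derivable (\<Delta> + F)"
    if "Rel (R, Forall U' B) F" and "derivable (add_mset (R, subst_fm 0 t B) (\<Delta> + F))"
    for R U' B F t \<Delta>
  proof -
    from that(1) obtain Q where "U' = U" and F: "F = ctx_sum Q"
      and "connectives B = connectives A" "wf_fm B"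
      and roles: "compl_partition (add_mset R (image_mset fst Q))"
      and Q: "\<forall>q \<in># Q. fst q \<in> U \<and> derivable (snd q + {#(fst q, Forall U B)#})"
      unfolding Rel_def by blast
    then have "cut_admissible (subst_fm 0 t B)" by (intro IH) simp_all
    moreover have "\<forall>q \<in># Q. derivable (snd q + {#(fst q, subst_fm 0 t B)#})"
      using Q derivable_ForallPos_inv by blast
    ultimately have "derivable (\<Delta> + F + ctx_sum Q)"
      using that(2) by (intro cut_admissibleD_party[OF _ roles]) (simp_all add: add.commute)
    then show ?thesis by (rule derivable_set_mono) (auto simp: F)
  qed
  have "Rel (R, Forall U A) (ctx_sum P)" using assms(2,3,5,6) unfolding Rel_def by blast
  with assms(4) show ?thesis
    by (rule derivable_replace[where Rel = Rel, OF _ _ lift _ _ _ _ _ _ _ forall_neg])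
      (auto simp: Rel_def)
qed

lemma cut_admissible_Forall:
  fixes A :: "('r, 'f, 'p) fm"
  assumes "ultrafilter U" and "wf_fm A"
    and IH: "\<And>B :: ('r, 'f, 'p) fm. connectives B \<le> connectives A \<Longrightarrow> wf_fm B \<Longrightarrow> cut_admissible B"
  shows "cut_admissible (Forall U A)"
  unfolding cut_admissible_def
proof (intro allI impI)
  fix P :: "('r set \<times> ('r, 'f, 'p) sequent) multiset"
  assume roles: "compl_partition (image_mset fst P)"
    and parties: "\<forall>q \<in># P. derivable (snd q + {#(fst q, Forall U A)#})"
  from assms(1) roles show "derivable (ctx_sum P)"
  proof (cases rule: compl_partition_ultrafilter_cases)
    case 1
    have "cut_admissible (subst_fm 0 (Var 0) A)" using assms(2) by (intro IH) simp_all
    moreover have "\<forall>q \<in># P. derivable (snd q + {#(fst q, subst_fm 0 (Var 0) A)#})"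
      using parties 1 derivable_ForallPos_inv by blast
    ultimately show ?thesis by (intro cut_admissibleD[OF _ roles])
  next
    case (2 R \<Gamma> P')
    then have "derivable (\<Gamma> + ctx_sum P')"
      using roles parties by (intro derivable_ForallNeg_cut[OF IH assms(2)]) auto
    then show ?thesis by (simp add: 2(1))
  qed
qed

theorem cut_admissible:
  fixes A :: "('r, 'f, 'p) fm"
  shows "wf_fm A \<Longrightarrow> cut_admissible A"
proof (induction "connectives A" arbitrary: A rule: less_induct)
  case less
  then show ?case
  proof (cases A)
    case Atom
    then show ?thesis by (simp add: cut_admissible_Atom)
  next
    case (Neg f B)
    then show ?thesis using less by (simp add: cut_admissible_Neg)
  next
    case (Conj U B C)
    then show ?thesis using less by (simp add: cut_admissible_Conj)
  next
    case (Imp f U B C)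
    then show ?thesis using less by (simp add: cut_admissible_Imp)
  next
    case (Forall U B)
    have "cut_admissible B'" if "connectives B' \<le> connectives B" and "wf_fm B'"
      for B' :: "('r, 'f, 'p) fm"
      using less.hyps[of B'] that Forall by simp
    then show ?thesis using less.prems Forall by (simp add: cut_admissible_Forall)
  qed
qed

theorem mainTheorem7:
  fixes Rs :: "'r set list"
    and \<Gamma>s :: "('r, 'f, 'p) sequent list"
    and A :: "('r, 'f, 'p) fm"
  assumes "length Rs \<ge> 1"
    and "length \<Gamma>s = length Rs"
    and "\<forall>i < length Rs. \<forall>j < length Rs. i \<noteq> j \<longrightarrow> (- (Rs ! i)) \<inter> (- (Rs ! j)) = {}"
    and "(\<Union>i < length Rs. - (Rs ! i)) = UNIV"
    and "wf_fm A"
    and "\<forall>i < length \<Gamma>s. wf_seq (\<Gamma>s ! i)"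
    and "\<forall>i < length Rs. derivable (\<Gamma>s ! i + {#(Rs ! i, A)#})"
  shows "derivable (sum_list \<Gamma>s)"
proof -
  define P where "P = mset (zip Rs \<Gamma>s)"
  have roles: "image_mset fst P = mset Rs" and ctx: "ctx_sum P = sum_list \<Gamma>s"
    using assms(2) by (simp_all add: P_def ctx_sum_def flip: mset_map sum_mset_sum_list)
  have "\<Union> (set (map uminus Rs)) = (\<Union>i < length Rs. - (Rs ! i))"
    by (auto simp: in_set_conv_nth) (use nth_mem in blast)
  then have "partitions (mset (map uminus Rs)) UNIV"
    unfolding partitions_mset_UNIV_iff using assms(1,3,4) by auto
  then have "compl_partition (image_mset fst P)" by (simp add: compl_partition_def roles)
  moreover have "\<forall>q \<in># P. derivable (snd q + {#(fst q, A)#})"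
    using assms(2,7) by (auto simp: P_def set_zip)
  ultimately have "derivable (ctx_sum P)" by (rule cut_admissibleD[OF cut_admissible[OF assms(5)]])
  then show ?thesis by (simp add: ctx)
qed

end
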